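(* Let $p>1$ and $0\le a<p-1$. For every integer $n\ge 2$, $$\bigl(n^p-(n-1)^p-n^a\bigr)\,T_{n-1}(p-a)\;\ge\; n^a\, S_{n-1}(p-a),$$ where $T_m(q)=\sum_{k=m+1}^{\infty}k^{-q}$ and $S_m(q)=\sum_{k=1}^{m}k^{-q}$.
   Context: For $q>1$ and an integer $m\ge 1$: $T_m(q)=\sum_{k=m+1}^\infty k^{-q}$ and $S_m(q)=\sum_{k=1}^m k^{-q}$. *)

theory Defs
  imports Complex_Main
begin

definition T :: "nat \<Rightarrow> real \<Rightarrow> real" where
  "T m q = (\<Sum>k. (real (k + m + 1)) powr (- q))"

definition S :: "nat \<Rightarrow> real \<Rightarrow> real" where
  "S m q = (\<Sum>k=1..m. (real k) powr (- q))"

end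

theory Submission
  imports Defs "HOL-Analysis.Summation_Tests"
begin

text \<open>Write \<open>q = p - a\<close> and \<open>m = n - 1\<close>. Among the integers \<open>k > m\<close>, the
  multiples of \<open>m + 1\<close> contribute \<open>(m + 1)\<^sup>-\<^sup>q \<zeta>(q)\<close> to \<open>T\<^sub>m(q)\<close>.
  The remaining ones, listed in increasing order, are at most \<open>(m + 1)/m\<close> times the
  integers \<open>m + 1, m + 2, \<dots>\<close>; hence
  \<open>T\<^sub>m(q) - (m + 1)\<^sup>-\<^sup>q \<zeta>(q) \<ge> (m/(m + 1))\<^sup>q T\<^sub>m(q)\<close>, that is
  \<open>\<zeta>(q) = T\<^sub>0(q) = S\<^sub>m(q) + T\<^sub>m(q) \<le> ((m + 1)\<^sup>q - m\<^sup>q) T\<^sub>m(q)\<close>.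
  Multiplying by \<open>n\<^sup>a\<close> and using \<open>n\<^sup>a m\<^sup>q \<ge> m\<^sup>p\<close> gives the claim.\<close>

lemma T_sums:
  assumes "q > 1"
  shows "(\<lambda>k. real (k + m + 1) powr (- q)) sums T m q"
proof -
  have "summable (\<lambda>k. real k powr (- q))"
    using assms by (simp add: summable_real_powr_iff)
  then have "summable (\<lambda>k. real (k + (m + 1)) powr (- q))"
    by (rule summable_ignore_initial_segment)
  then show ?thesis
    unfolding T_def by (simp add: add.assoc summable_sums)
qed

lemma T_nonneg:
  assumes "q > 1"
  shows "T m q \<ge> 0"
  using sums_summable[OF T_sums[OF assms]] unfolding T_def by (rule suminf_nonneg) auto

lemma T_0_eq_S_plus_T:
  assumes "q > 1"
  shows "T 0 q = S m q + T m q"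
proof -
  have S_shift: "S m q = (\<Sum>k<m. real (k + 1) powr (- q))"
    unfolding S_def
    by (rule sum.reindex_bij_witness[where i="\<lambda>k. k + 1" and j="\<lambda>k. k - 1"]) auto
  have "summable (\<lambda>k. real (k + 0 + 1) powr (- q))"
    using T_sums[OF assms] by (rule sums_summable)
  then show ?thesis
    unfolding S_shift T_def
    using suminf_split_initial_segment[of "\<lambda>k. real (k + 1) powr (- q)" m]
    by (simp add: add.commute add.left_commute)
qed

lemma powr_mult_powr_neg_mono:
  fixes q u v x y :: real
  assumes "0 \<le> q" "0 \<le> u" "0 < x" "0 < y" "u * y \<le> v * x"
  shows "u powr q * x powr (- q) \<le> v powr q * y powr (- q)"
proof -
  have "u / x \<le> v / y"
    using assms by (simp add: divide_simps)
  moreover have "0 \<le> v"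
    using \<open>u / x \<le> v / y\<close> assms by (smt (verit) divide_nonneg_pos zero_le_divide_iff)
  ultimately have "(u / x) powr q \<le> (v / y) powr q"
    using assms by (intro powr_mono2) auto
  then show ?thesis
    using assms by (simp add: powr_divide powr_minus field_simps)
qed

lemma sum_block_eq: "sum g {a..<a + m} = (\<Sum>r<m. g (a + r))" for a m :: nat
  by (simp add: sum.atLeastLessThan_shift_0 atLeast0LessThan)

lemma T_0_le_powr_diff_mult_T:
  assumes "q > 1" "m \<ge> 1"
  shows "T 0 q \<le> (real (m + 1) powr q - real m powr q) * T m q"
proof -
  define g where "g k = real (k + m + 1) powr (- q)" for k
  \<comment> \<open>the non-multiples of \<open>m + 1\<close> in the \<open>s\<close>-th block of \<open>m + 1\<close> consecutive terms\<close>
  define A where "A s = (\<Sum>r<m. g (s * (m + 1) + 1 + r))" for s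
  define C where "C s = (\<Sum>r<m. g (s * m + r))" for s
  have g_sums: "g sums T m q"
    unfolding g_def using T_sums[OF assms(1)] .
  have multiple: "g (s * (m + 1)) = real (m + 1) powr (- q) * real (s + 0 + 1) powr (- q)" for s
  proof -
    have "real (s * (m + 1) + m + 1) = real (m + 1) * real (s + 0 + 1)"
      by (simp add: algebra_simps)
    then show ?thesis
      unfolding g_def by (simp add: powr_mult)
  qed
  have "(\<lambda>s. \<Sum>r<m + 1. g (s * (m + 1) + r)) sums T m q"
    using sums_group[OF g_sums, of "m + 1"] unfolding sum_block_eq by simp
  then have "(\<lambda>s. real (m + 1) powr (- q) * real (s + 0 + 1) powr (- q) + A s) sums T m q"
    unfolding A_def multiple[symmetric]
    by (simp only: Suc_eq_plus1 [symmetric] sum.lessThan_Suc_shift) simp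
  moreover have "(\<lambda>s. real (m + 1) powr (- q) * real (s + 0 + 1) powr (- q))
      sums (real (m + 1) powr (- q) * T 0 q)"
    using T_sums[OF assms(1)] by (rule sums_mult)
  ultimately have A_sums: "A sums (T m q - real (m + 1) powr (- q) * T 0 q)"
    by (fastforce dest: sums_diff)
  have C_sums: "C sums T m q"
    using sums_group[OF g_sums, of m] assms(2) unfolding C_def sum_block_eq by simp
  have "real m powr q * C s \<le> real (m + 1) powr q * A s" for s
    unfolding A_def C_def sum_distrib_left
  proof (rule sum_mono)
    fix r
    have cross:
      "real m * real (s * (m + 1) + 1 + r + m + 1) \<le> real (m + 1) * real (s * m + r + m + 1)"
      unfolding of_nat_mult [symmetric] of_nat_le_iff by (simp add: algebra_simps)
    show "real m powr q * g (s * m + r) \<le> real (m + 1) powr q * g (s * (m + 1) + 1 + r)"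
      unfolding g_def using assms(1)
      by (intro powr_mult_powr_neg_mono[OF _ _ _ _ cross])
        (auto simp only: of_nat_0_le_iff of_nat_0_less_iff)
  qed
  then have "real m powr q * T m q
      \<le> real (m + 1) powr q * (T m q - real (m + 1) powr (- q) * T 0 q)"
    by (rule sums_le[OF _ sums_mult[OF C_sums] sums_mult[OF A_sums]])
  then show ?thesis
    by (simp add: algebra_simps powr_minus)
qed

theorem lemma3p2:
  fixes p a :: real and n :: nat
  assumes "p > 1" and "0 \<le> a" and "a < p - 1" and "n \<ge> 2"
  shows "(real n powr p - real (n - 1) powr p - real n powr a) * T (n - 1) (p - a)
           \<ge> real n powr a * S (n - 1) (p - a)"
proof -
  define q where "q = p - a"
  define m where "m = n - 1"
  have q: "q > 1" and m: "m \<ge> 1" and n: "real n = real (m + 1)"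
    using assms by (auto simp: q_def m_def)
  have p: "p = a + q"
    by (simp add: q_def)
  have "real m powr p = real m powr a * real m powr q"
    by (simp add: p powr_add)
  also have "\<dots> \<le> real n powr a * real m powr q"
    using assms(2) by (intro mult_right_mono powr_mono2) (auto simp: n)
  finally have m_p: "real m powr p \<le> real n powr a * real m powr q" .
  have "real n powr a * (S m q + T m q) = real n powr a * T 0 q"
    by (simp only: T_0_eq_S_plus_T[OF q, where m = m])
  also have "\<dots> \<le> real n powr a * ((real n powr q - real m powr q) * T m q)"
    using T_0_le_powr_diff_mult_T[OF q m] by (intro mult_left_mono) (auto simp: n)
  also have "\<dots> = (real n powr p - real n powr a * real m powr q) * T m q"
    by (simp add: p powr_add algebra_simps)
  also have "\<dots> \<le> (real n powr p - real m powr p) * T m q"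
    using m_p T_nonneg[OF q] by (intro mult_right_mono) auto
  finally show ?thesis
    unfolding q_def [symmetric] m_def [symmetric] by (simp add: algebra_simps)
qed

end
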